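(* For all integers $0<k \leq \ell < n$, the polynomial \[ \overline{ { n \brack k}}_{q,t} \overline{ { n \brack \ell }}_{q,t} - \overline{ { n \brack k-1}}_{q,t} \overline{ { n \brack \ell +1}}_{q,t} \] has non-negative coefficients as a polynomial in $t$ and $q$.
   Context: An overpartition is a partition in which the last occurrence of each distinct part size may be overlined; its weight $|\lambda|$ is the sum of its parts. For integers $0\le b\le a$, $\overline{{a \brack b}}_{q,t}=\sum_{\lambda} t^{\#_o(\lambda)} q^{|\lambda|}$, the sum over all overpartitions $\lambda$ with largest part at most $a-b$ and at most $b$ parts, where $\#_o(\lambda)$ is the number of overlined parts of $\lambda$. *)

theory Defs
  imports "HOL-Library.Multiset" "HOL-Computational_Algebra.Polynomial"
begin

text \<open>An overpartition is encoded as a pair (P, S): P is the multiset of (positive)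
parts of the underlying partition, and S is the set of distinct part sizes whose
last occurrence is overlined (so S is a subset of the distinct parts of P).\<close>

definition overpartitions :: "nat \<Rightarrow> nat \<Rightarrow> (nat multiset \<times> nat set) set" where
  "overpartitions m b =
     {(P, S). (\<forall>x\<in>#P. 0 < x \<and> x \<le> m) \<and> size P \<le> b \<and> S \<subseteq> set_mset P}"

text \<open>Bivariate polynomials in t and q are represented as int poly poly:
the outer variable is t, the inner variable is q.  So the coefficient of
t^i q^j of F is  coeff (coeff F i) j.\<close>

definition obinom :: "nat \<Rightarrow> nat \<Rightarrow> int poly poly" where
  "obinom a b = (\<Sum>(P, S)\<in>overpartitions (a - b) b. monom (monom 1 (sum_mset P)) (card S))"

end

theory Submission
  imports Defs
begin

text \<open>
  Let \<open>G(a, b)\<close> be the generating function of overpartitions with largest part at most \<open>a\<close>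
  and at most \<open>b\<close> parts, extended by \<open>0\<close> to negative indices. Sorting overpartitions by how
  often the part \<open>a\<close> occurs and whether it is overlined gives
  \<open>G(a, b) = G(a - 1, b) + q\<^sup>a G(a, b - 1) + t q\<^sup>a G(a - 1, b - 1)\<close>; the analogous recurrence
  in \<open>b\<close> follows because its defect satisfies the first recurrence and vanishes on the boundary.

  With these recurrences, \<open>G(a, b) G(c, e) - q\<^sup>j G(a + 1, b - 1) G(c - 1, e + 1)\<close> is a combination,
  with coefficients \<open>1\<close>, \<open>q\<^sup>x\<close> and \<open>t q\<^sup>x\<close>, of the same expression at smaller \<open>a + b + c + e\<close>.
  Choosing which of the four expansions to use according to the slack
  \<open>(a + 1 - c) + (e + 1 - b) - j\<close> keeps every term in the range \<open>c \<le> a + 1\<close>, \<open>b \<le> e + 1\<close>,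
  \<open>j \<le> (a + 1 - c) + (e + 1 - b)\<close>, so induction shows that all these expressions have non-negative
  coefficients. The theorem is the instance \<open>j = 0\<close>, \<open>(a, b, c, e) = (n - k, k, n - l, l)\<close>.
\<close>

section \<open>Polynomials with non-negative coefficients\<close>

definition nonneg_coeffs :: "'a::linordered_idom poly \<Rightarrow> bool" where
  "nonneg_coeffs p \<longleftrightarrow> (\<forall>j. 0 \<le> coeff p j)"

definition nonneg_coeffs2 :: "'a::linordered_idom poly poly \<Rightarrow> bool" where
  "nonneg_coeffs2 F \<longleftrightarrow> (\<forall>i. nonneg_coeffs (coeff F i))"

lemma nonneg_coeffs_add: "nonneg_coeffs p \<Longrightarrow> nonneg_coeffs q \<Longrightarrow> nonneg_coeffs (p + q)"
  by (simp add: nonneg_coeffs_def)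

lemma nonneg_coeffs_sum: "(\<And>x. x \<in> A \<Longrightarrow> nonneg_coeffs (f x)) \<Longrightarrow> nonneg_coeffs (sum f A)"
  by (simp add: nonneg_coeffs_def coeff_sum sum_nonneg)

lemma nonneg_coeffs_mult: "nonneg_coeffs p \<Longrightarrow> nonneg_coeffs q \<Longrightarrow> nonneg_coeffs (p * q)"
  by (simp add: nonneg_coeffs_def coeff_mult sum_nonneg)

lemma nonneg_coeffs2_0: "nonneg_coeffs2 0"
  by (simp add: nonneg_coeffs2_def nonneg_coeffs_def)

lemma nonneg_coeffs2_add: "nonneg_coeffs2 F \<Longrightarrow> nonneg_coeffs2 G \<Longrightarrow> nonneg_coeffs2 (F + G)"
  by (simp add: nonneg_coeffs2_def nonneg_coeffs_add)

lemma nonneg_coeffs2_sum: "(\<And>x. x \<in> A \<Longrightarrow> nonneg_coeffs2 (f x)) \<Longrightarrow> nonneg_coeffs2 (sum f A)"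
  by (simp add: nonneg_coeffs2_def coeff_sum nonneg_coeffs_sum)

lemma nonneg_coeffs2_mult: "nonneg_coeffs2 F \<Longrightarrow> nonneg_coeffs2 G \<Longrightarrow> nonneg_coeffs2 (F * G)"
  by (simp add: nonneg_coeffs2_def coeff_mult nonneg_coeffs_sum nonneg_coeffs_mult)

lemma nonneg_coeffs2_monom_monom: "0 \<le> c \<Longrightarrow> nonneg_coeffs2 (monom (monom c i) j)"
  by (simp add: nonneg_coeffs2_def nonneg_coeffs_def)

lemma nonneg_coeffs2_1: "nonneg_coeffs2 1"
  using nonneg_coeffs2_monom_monom[of 1 0 0] by simp

lemma nonneg_coeffs2_power: "nonneg_coeffs2 F \<Longrightarrow> nonneg_coeffs2 (F ^ n)"
  by (induction n) (simp_all add: nonneg_coeffs2_1 nonneg_coeffs2_mult)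

section \<open>The overpartition generating function\<close>

definition q_var :: "int poly poly" where
  "q_var = monom (monom 1 1) 0"

definition t_var :: "int poly poly" where
  "t_var = monom 1 1"

lemma q_var_power: "q_var ^ n = monom (monom 1 n) 0"
  by (simp add: q_var_def monom_power)

lemma nonneg_coeffs2_shift:
  assumes "nonneg_coeffs2 F" "nonneg_coeffs2 G" "nonneg_coeffs2 H"
  shows "nonneg_coeffs2 (F + q_var ^ k * G + t_var * q_var ^ k * H)"
proof -
  have "nonneg_coeffs2 q_var" "nonneg_coeffs2 t_var"
    using nonneg_coeffs2_monom_monom[of 1 1 0] nonneg_coeffs2_monom_monom[of 1 0 1]
    by (simp_all add: q_var_def t_var_def)
  then show ?thesis
    using assms by (intro nonneg_coeffs2_add nonneg_coeffs2_mult nonneg_coeffs2_power)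
qed

definition ovp_weight :: "nat multiset \<times> nat set \<Rightarrow> int poly poly" where
  "ovp_weight x = monom (monom 1 (sum_mset (fst x))) (card (snd x))"

definition ogf :: "nat \<Rightarrow> nat \<Rightarrow> int poly poly" where
  "ogf m b = (\<Sum>x\<in>overpartitions m b. ovp_weight x)"

lemma obinom_eq_ogf: "obinom a b = ogf (a - b) b"
  by (simp add: obinom_def ogf_def ovp_weight_def case_prod_beta)

lemma nonneg_coeffs2_ogf: "nonneg_coeffs2 (ogf m b)"
  unfolding ogf_def ovp_weight_def by (intro nonneg_coeffs2_sum nonneg_coeffs2_monom_monom) simp

lemma finite_overpartitions: "finite (overpartitions m b)"
proof (rule finite_subset)
  show "overpartitions m b \<subseteq> (\<Union>n\<le>b. multisets_of_size {1..m} n) \<times> Pow {1..m}"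
    unfolding overpartitions_def multisets_of_size_def by force
qed auto

lemma ogf_0_left: "ogf 0 b = 1"
proof -
  have "P = {#}" if "\<forall>x\<in>#P. 0 < x \<and> x \<le> (0::nat)" for P
    using that by (metis multiset_nonemptyE not_less_zero le_zero_eq)
  then have "overpartitions 0 b = {({#}, {})}"
    unfolding overpartitions_def by auto
  then show ?thesis by (simp add: ogf_def ovp_weight_def)
qed

lemma ogf_0_right: "ogf m 0 = 1"
proof -
  have "overpartitions m 0 = {({#}, {})}"
    unfolding overpartitions_def by auto
  then show ?thesis by (simp add: ogf_def ovp_weight_def)
qed

lemma overpartitions_without_part:
  assumes "0 < m"
  shows "{x \<in> overpartitions m b. m \<notin># fst x} = overpartitions (m - 1) b"
proof -
  have parts: "(\<forall>y\<in>#P. 0 < y \<and> y \<le> m - 1) \<longleftrightarrow> (\<forall>y\<in>#P. 0 < y \<and> y \<le> m) \<and> m \<notin># P"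
    for P :: "nat multiset"
  proof
    assume "\<forall>y\<in>#P. 0 < y \<and> y \<le> m - 1"
    moreover have "\<not> m \<le> m - 1"
      using assms by simp
    ultimately show "(\<forall>y\<in>#P. 0 < y \<and> y \<le> m) \<and> m \<notin># P"
      by auto
  next
    assume *: "(\<forall>y\<in>#P. 0 < y \<and> y \<le> m) \<and> m \<notin># P"
    show "\<forall>y\<in>#P. 0 < y \<and> y \<le> m - 1"
    proof
      fix y assume "y \<in># P"
      with * have "0 < y" "y \<le> m" "y \<noteq> m" by auto
      then show "0 < y \<and> y \<le> m - 1" by simp
    qed
  qed
  show ?thesis
    unfolding overpartitions_def parts by auto
qed

lemma overpartitions_add_plain_part:
  assumes "0 < m"
  shows "(\<lambda>(P, S). (add_mset m P, S)) ` overpartitions m b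
    = {x \<in> overpartitions m (Suc b). m \<in># fst x \<and> snd x \<subseteq> set_mset (fst x - {#m#})}"
proof (intro equalityI subsetI)
  fix x assume "x \<in> {x \<in> overpartitions m (Suc b). m \<in># fst x \<and> snd x \<subseteq> set_mset (fst x - {#m#})}"
  then obtain P S where x: "x = (P, S)" "m \<in># P" "S \<subseteq> set_mset (P - {#m#})"
    and P: "\<forall>y\<in>#P. 0 < y \<and> y \<le> m" "size P \<le> Suc b"
    unfolding overpartitions_def by auto
  have "(P - {#m#}, S) \<in> overpartitions m b"
    using x P unfolding overpartitions_def by (auto simp: size_Diff_singleton dest: in_diffD)
  moreover have "x = (add_mset m (P - {#m#}), S)"
    using x by simp
  ultimately show "x \<in> (\<lambda>(P, S). (add_mset m P, S)) ` overpartitions m b"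
    by force
qed (use assms in \<open>auto simp: overpartitions_def\<close>)

lemma overpartitions_add_overlined_part:
  assumes "0 < m"
  shows "(\<lambda>(P, S). (add_mset m P, insert m S)) ` overpartitions (m - 1) b
    = {x \<in> overpartitions m (Suc b). count (fst x) m = 1 \<and> m \<in> snd x}"
proof (intro equalityI subsetI)
  fix x assume "x \<in> {x \<in> overpartitions m (Suc b). count (fst x) m = 1 \<and> m \<in> snd x}"
  then obtain P S where x: "x = (P, S)" "count P m = 1" "m \<in> S"
    and P: "\<forall>y\<in>#P. 0 < y \<and> y \<le> m" "size P \<le> Suc b" "S \<subseteq> set_mset P"
    unfolding overpartitions_def by (cases x) auto
  have m_in: "m \<in># P"
    using x(2) by (auto intro: count_inI)
  have m_notin: "m \<notin># P - {#m#}"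
    using x(2) by (simp add: not_in_iff)
  have "\<forall>y\<in>#P - {#m#}. 0 < y \<and> y \<le> m - 1"
  proof
    fix y assume y: "y \<in># P - {#m#}"
    then have "y \<noteq> m"
      using m_notin by blast
    moreover have "0 < y \<and> y \<le> m"
      using P(1) y by (auto dest: in_diffD)
    ultimately show "0 < y \<and> y \<le> m - 1"
      by auto
  qed
  moreover have "size (P - {#m#}) \<le> b"
    using P(2) m_in by (simp add: size_Diff_singleton)
  moreover have "S - {m} \<subseteq> set_mset (P - {#m#})"
  proof
    fix y assume "y \<in> S - {m}"
    then have "y \<in># P" "y \<noteq> m"
      using P(3) by auto
    then show "y \<in># P - {#m#}"
      by (simp add: in_diff_count)
  qed
  ultimately have "(P - {#m#}, S - {m}) \<in> overpartitions (m - 1) b"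
    unfolding overpartitions_def by blast
  moreover have "x = (add_mset m (P - {#m#}), insert m (S - {m}))"
    using x(1,3) m_in by (simp add: insert_absorb)
  ultimately show "x \<in> (\<lambda>(P, S). (add_mset m P, insert m S)) ` overpartitions (m - 1) b"
    by (metis (no_types, lifting) case_prod_conv rev_image_eqI)
next
  fix x assume "x \<in> (\<lambda>(P, S). (add_mset m P, insert m S)) ` overpartitions (m - 1) b"
  then obtain P S where x: "x = (add_mset m P, insert m S)"
    and P: "\<forall>y\<in>#P. 0 < y \<and> y \<le> m - 1" "size P \<le> b" "S \<subseteq> set_mset P"
    unfolding overpartitions_def by auto
  have "m \<notin># P"
    using P(1) assms by (metis diff_less less_numeral_extra(1) not_le)
  then have "count (add_mset m P) m = 1"
    by (simp add: not_in_iff)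
  moreover have "\<forall>y\<in># add_mset m P. 0 < y \<and> y \<le> m"
    using P(1) assms by auto
  ultimately show "x \<in> {x \<in> overpartitions m (Suc b). count (fst x) m = 1 \<and> m \<in> snd x}"
    using x P(2,3) unfolding overpartitions_def by auto
qed

lemma ovp_weight_add_plain_part:
  "ovp_weight (add_mset m P, S) = q_var ^ m * ovp_weight (P, S)"
  by (simp add: ovp_weight_def q_var_power mult_monom)

lemma ovp_weight_add_overlined_part:
  assumes "finite S" "m \<notin> S"
  shows "ovp_weight (add_mset m P, insert m S) = t_var * q_var ^ m * ovp_weight (P, S)"
  using assms by (simp add: ovp_weight_def q_var_power t_var_def mult_monom)

lemma overlined_part_cases:
  assumes "S \<subseteq> set_mset P" "m \<in># P"
  shows "S \<subseteq> set_mset (P - {#m#}) \<longleftrightarrow> \<not> (count P m = 1 \<and> m \<in> S)"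
proof -
  have "0 < count P m" "count (P - {#m#}) m = count P m - 1"
    using assms(2) by simp_all
  then have "m \<notin># P - {#m#} \<longleftrightarrow> count P m = 1"
    unfolding not_in_iff by arith
  then show ?thesis
    using assms(1) at_most_one_mset_mset_diff[of m P] more_than_one_mset_mset_diff[of m P]
    by auto
qed

lemma sum_ovp_weight_add_plain_part:
  assumes "0 < m"
  shows "(\<Sum>x\<in>{x \<in> overpartitions m (Suc b). m \<in># fst x \<and> \<not> (count (fst x) m = 1 \<and> m \<in> snd x)}.
      ovp_weight x) = q_var ^ m * ogf m b"
proof -
  let ?add = "\<lambda>(P, S). (add_mset m P, S)"
  have "{x \<in> overpartitions m (Suc b). m \<in># fst x \<and> \<not> (count (fst x) m = 1 \<and> m \<in> snd x)}
      = {x \<in> overpartitions m (Suc b). m \<in># fst x \<and> snd x \<subseteq> set_mset (fst x - {#m#})}"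
  proof (rule Collect_cong)
    fix x
    show "x \<in> overpartitions m (Suc b) \<and> m \<in># fst x \<and> \<not> (count (fst x) m = 1 \<and> m \<in> snd x)
      \<longleftrightarrow> x \<in> overpartitions m (Suc b) \<and> m \<in># fst x \<and> snd x \<subseteq> set_mset (fst x - {#m#})"
      using overlined_part_cases[of "snd x" "fst x" m] by (auto simp: overpartitions_def)
  qed
  also have "\<dots> = ?add ` overpartitions m b"
    using overpartitions_add_plain_part[OF assms] by simp
  finally have A1: "{x \<in> overpartitions m (Suc b). m \<in># fst x \<and> \<not> (count (fst x) m = 1 \<and> m \<in> snd x)}
      = ?add ` overpartitions m b" .
  have "inj_on ?add (overpartitions m b)"
    by (auto simp: inj_on_def)
  then show ?thesis
    unfolding A1 sum.reindex[OF \<open>inj_on ?add _\<close>] ogf_def sum_distrib_left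
    by (intro sum.cong) (auto simp: ovp_weight_add_plain_part)
qed

lemma sum_ovp_weight_add_overlined_part:
  assumes "0 < m"
  shows "(\<Sum>x\<in>{x \<in> overpartitions m (Suc b). count (fst x) m = 1 \<and> m \<in> snd x}. ovp_weight x)
    = t_var * q_var ^ m * ogf (m - 1) b"
proof -
  let ?add = "\<lambda>(P, S). (add_mset m P, insert m S)"
  have no_m: "finite S \<and> m \<notin> S" if "(P, S) \<in> overpartitions (m - 1) b" for P S
    using that assms finite_subset unfolding overpartitions_def by fastforce
  then have "inj_on ?add (overpartitions (m - 1) b)"
    unfolding inj_on_def by (fastforce simp: insert_ident)
  then show ?thesis
    unfolding overpartitions_add_overlined_part[OF assms, symmetric] sum.reindex[OF \<open>inj_on ?add _\<close>]
      ogf_def sum_distrib_left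
    using no_m by (intro sum.cong) (auto simp: ovp_weight_add_overlined_part)
qed

lemma ogf_rec_largest_part:
  assumes "0 < m"
  shows "ogf m (Suc b) = ogf (m - 1) (Suc b) + q_var ^ m * ogf m b + t_var * q_var ^ m * ogf (m - 1) b"
proof -
  define A0 where "A0 = {x \<in> overpartitions m (Suc b). m \<notin># fst x}"
  define A1 where "A1 = {x \<in> overpartitions m (Suc b). m \<in># fst x \<and> \<not> (count (fst x) m = 1 \<and> m \<in> snd x)}"
  define A2 where "A2 = {x \<in> overpartitions m (Suc b). count (fst x) m = 1 \<and> m \<in> snd x}"
  have "overpartitions m (Suc b) = A0 \<union> A1 \<union> A2" "A0 \<inter> A1 = {}" "(A0 \<union> A1) \<inter> A2 = {}"
    unfolding A0_def A1_def A2_def by (auto simp: not_in_iff dest: count_eq_zero_iff[THEN iffD1])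
  moreover have "finite A0" "finite A1" "finite A2"
    using finite_overpartitions unfolding A0_def A1_def A2_def by auto
  ultimately have "ogf m (Suc b) = sum ovp_weight A0 + sum ovp_weight A1 + sum ovp_weight A2"
    unfolding ogf_def by (simp add: sum.union_disjoint)
  then show ?thesis
    using overpartitions_without_part[OF assms] sum_ovp_weight_add_plain_part[OF assms]
      sum_ovp_weight_add_overlined_part[OF assms]
    by (simp add: A0_def A1_def A2_def ogf_def)
qed

section \<open>Recurrences for the zero-extended generating function\<close>

definition ogf_int :: "int \<Rightarrow> int \<Rightarrow> int poly poly" where
  "ogf_int a b = (if a < 0 \<or> b < 0 then 0 else ogf (nat a) (nat b))"

lemma nonneg_coeffs2_ogf_int: "nonneg_coeffs2 (ogf_int a b)"
  by (simp add: ogf_int_def nonneg_coeffs2_ogf nonneg_coeffs2_0)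

lemma ogf_int_rec_largest_part:
  assumes "(a, b) \<noteq> (0, 0)"
  shows "ogf_int a b = ogf_int (a - 1) b + q_var ^ nat a * ogf_int a (b - 1)
    + t_var * q_var ^ nat a * ogf_int (a - 1) (b - 1)"
proof -
  consider "a < 0 \<or> b < 0" | "a = 0" "0 < b" | "0 < a" "b = 0" | "0 < a" "0 < b"
    using assms by fastforce
  then show ?thesis
  proof cases
    case 4
    then have "nat a - 1 = nat (a - 1)" "nat b = Suc (nat (b - 1))"
      by auto
    then show ?thesis
      using ogf_rec_largest_part[of "nat a" "nat (b - 1)"] 4 by (simp add: ogf_int_def)
  qed (auto simp: ogf_int_def ogf_0_left ogf_0_right)
qed

definition rec_parts_defect :: "int \<Rightarrow> int \<Rightarrow> int poly poly" where
  "rec_parts_defect a b = ogf_int a b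
    - (ogf_int a (b - 1) + q_var ^ nat b * ogf_int (a - 1) b + t_var * q_var ^ nat b * ogf_int (a - 1) (b - 1))"

lemma rec_parts_defect_rec_largest_part:
  assumes "(i, j) \<noteq> (0, 0)"
  shows "rec_parts_defect (int i + 1) (int j + 1) = rec_parts_defect (int i) (int j + 1)
    + q_var ^ (i + 1) * rec_parts_defect (int i + 1) (int j)
    + t_var * q_var ^ (i + 1) * rec_parts_defect (int i) (int j)"
proof -
  let ?G = ogf_int
  have Suc_i: "nat (int i + 1) = i + 1" and Suc_j: "nat (int j + 1) = j + 1"
    by (simp_all add: nat_eq_iff)
  have r1: "?G (int i + 1) (int j + 1) = ?G (int i) (int j + 1) + q_var ^ (i + 1) * ?G (int i + 1) (int j)
      + t_var * q_var ^ (i + 1) * ?G (int i) (int j)"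
    using ogf_int_rec_largest_part[of "int i + 1" "int j + 1"] by (simp only: Suc_i) simp
  have r2: "?G (int i + 1) (int j) = ?G (int i) (int j) + q_var ^ (i + 1) * ?G (int i + 1) (int j - 1)
      + t_var * q_var ^ (i + 1) * ?G (int i) (int j - 1)"
    using ogf_int_rec_largest_part[of "int i + 1" "int j"] by (simp only: Suc_i) simp
  have r3: "?G (int i) (int j + 1) = ?G (int i - 1) (int j + 1) + q_var ^ i * ?G (int i) (int j)
      + t_var * q_var ^ i * ?G (int i - 1) (int j)"
    using ogf_int_rec_largest_part[of "int i" "int j + 1"] by simp
  have r4: "?G (int i) (int j) = ?G (int i - 1) (int j) + q_var ^ i * ?G (int i) (int j - 1)
      + t_var * q_var ^ i * ?G (int i - 1) (int j - 1)"
    using ogf_int_rec_largest_part[of "int i" "int j"] assms by simp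
  show ?thesis
    unfolding rec_parts_defect_def
    by (simp only: Suc_i Suc_j nat_int add_diff_cancel_right' r1 r2 r3 r4) (simp add: algebra_simps)
qed

lemma rec_parts_defect_eq_0:
  assumes "(a, b) \<noteq> (0, 0)"
  shows "rec_parts_defect a b = 0"
  using assms
proof (induction "nat (a + b)" arbitrary: a b rule: less_induct)
  case less
  consider "a < 0 \<or> b < 0" | "a = 0" "0 < b" | "0 < a" "b = 0" | "a = 1" "b = 1"
    | "0 < a" "0 < b" "(a, b) \<noteq> (1, 1)"
    using less.prems by fastforce
  then show ?case
  proof cases
    case 4
    have "ogf_int 1 1 = ogf_int 0 1 + q_var * ogf_int 1 0 + t_var * q_var * ogf_int 0 0"
      using ogf_int_rec_largest_part[of 1 1] by simp
    then show ?thesis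
      using 4 by (simp add: rec_parts_defect_def ogf_int_def ogf_0_left ogf_0_right)
  next
    case 5
    define i j where "i = nat (a - 1)" and "j = nat (b - 1)"
    then have "a = int i + 1" "b = int j + 1" "(i, j) \<noteq> (0, 0)"
      using 5 by auto
    then show ?thesis
      using rec_parts_defect_rec_largest_part[of i j] less.hyps by simp
  qed (auto simp: rec_parts_defect_def ogf_int_def ogf_0_left ogf_0_right)
qed

lemma ogf_int_rec_parts:
  assumes "(a, b) \<noteq> (0, 0)"
  shows "ogf_int a b = ogf_int a (b - 1) + q_var ^ nat b * ogf_int (a - 1) b
    + t_var * q_var ^ nat b * ogf_int (a - 1) (b - 1)"
  using rec_parts_defect_eq_0[OF assms] by (simp add: rec_parts_defect_def)

section \<open>Non-negativity of the shifted product difference\<close>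

definition shifted_prod_diff :: "nat \<Rightarrow> int \<Rightarrow> int \<Rightarrow> int \<Rightarrow> int \<Rightarrow> int poly poly" where
  "shifted_prod_diff j a b c e =
     ogf_int a b * ogf_int c e - q_var ^ j * ogf_int (a + 1) (b - 1) * ogf_int (c - 1) (e + 1)"

lemma q_var_power_nat_plus_1: "0 \<le> x \<Longrightarrow> q_var ^ nat (x + 1) = q_var * q_var ^ nat x"
  by (simp add: nat_add_distrib)

lemma shifted_prod_diff_rec_left_largest:
  assumes "0 \<le> a" "1 \<le> b"
  shows "shifted_prod_diff j a b c e = shifted_prod_diff j (a - 1) b c e
    + q_var ^ nat a * shifted_prod_diff (Suc j) a (b - 1) c e
    + t_var * q_var ^ nat a * shifted_prod_diff (Suc j) (a - 1) (b - 1) c e"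
proof -
  have "ogf_int a b = ogf_int (a - 1) b + q_var ^ nat a * ogf_int a (b - 1)
      + t_var * q_var ^ nat a * ogf_int (a - 1) (b - 1)"
    using ogf_int_rec_largest_part[of a b] assms by simp
  moreover have "ogf_int (a + 1) (b - 1) = ogf_int a (b - 1) + q_var ^ nat (a + 1) * ogf_int (a + 1) (b - 1 - 1)
      + t_var * q_var ^ nat (a + 1) * ogf_int a (b - 1 - 1)"
    using ogf_int_rec_largest_part[of "a + 1" "b - 1"] assms by simp
  ultimately show ?thesis
    unfolding shifted_prod_diff_def q_var_power_nat_plus_1[OF assms(1)] by (simp add: algebra_simps)
qed

lemma shifted_prod_diff_rec_left_parts:
  assumes "0 \<le> a" "1 \<le> b"
  shows "shifted_prod_diff (Suc j) a b c e = shifted_prod_diff (Suc j) a (b - 1) c e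
    + q_var ^ nat b * shifted_prod_diff j (a - 1) b c e
    + t_var * q_var ^ nat b * shifted_prod_diff j (a - 1) (b - 1) c e"
proof -
  have "ogf_int a b = ogf_int a (b - 1) + q_var ^ nat b * ogf_int (a - 1) b
      + t_var * q_var ^ nat b * ogf_int (a - 1) (b - 1)"
    using ogf_int_rec_parts[of a b] assms by simp
  moreover have "ogf_int (a + 1) (b - 1) = ogf_int (a + 1) (b - 1 - 1) + q_var ^ nat (b - 1) * ogf_int a (b - 1)
      + t_var * q_var ^ nat (b - 1) * ogf_int a (b - 1 - 1)"
    using ogf_int_rec_parts[of "a + 1" "b - 1"] assms by simp
  moreover have "q_var ^ nat b = q_var * q_var ^ nat (b - 1)"
    using assms q_var_power_nat_plus_1[of "b - 1"] by simp
  ultimately show ?thesis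
    unfolding shifted_prod_diff_def by (simp add: algebra_simps)
qed

lemma shifted_prod_diff_rec_right_largest:
  assumes "1 \<le> c" "0 \<le> e"
  shows "shifted_prod_diff (Suc j) a b c e = shifted_prod_diff (Suc j) a b (c - 1) e
    + q_var ^ nat c * shifted_prod_diff j a b c (e - 1)
    + t_var * q_var ^ nat c * shifted_prod_diff j a b (c - 1) (e - 1)"
proof -
  have "ogf_int c e = ogf_int (c - 1) e + q_var ^ nat c * ogf_int c (e - 1)
      + t_var * q_var ^ nat c * ogf_int (c - 1) (e - 1)"
    using ogf_int_rec_largest_part[of c e] assms by simp
  moreover have "ogf_int (c - 1) (e + 1) = ogf_int (c - 1 - 1) (e + 1) + q_var ^ nat (c - 1) * ogf_int (c - 1) e
      + t_var * q_var ^ nat (c - 1) * ogf_int (c - 1 - 1) e"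
    using ogf_int_rec_largest_part[of "c - 1" "e + 1"] assms by simp
  moreover have "q_var ^ nat c = q_var * q_var ^ nat (c - 1)"
    using assms q_var_power_nat_plus_1[of "c - 1"] by simp
  ultimately show ?thesis
    unfolding shifted_prod_diff_def by (simp add: algebra_simps)
qed

lemma shifted_prod_diff_rec_right_parts:
  assumes "1 \<le> c" "0 \<le> e"
  shows "shifted_prod_diff j a b c e = shifted_prod_diff j a b c (e - 1)
    + q_var ^ nat e * shifted_prod_diff (Suc j) a b (c - 1) e
    + t_var * q_var ^ nat e * shifted_prod_diff (Suc j) a b (c - 1) (e - 1)"
proof -
  have "ogf_int c e = ogf_int c (e - 1) + q_var ^ nat e * ogf_int (c - 1) e
      + t_var * q_var ^ nat e * ogf_int (c - 1) (e - 1)"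
    using ogf_int_rec_parts[of c e] assms by simp
  moreover have "ogf_int (c - 1) (e + 1) = ogf_int (c - 1) e + q_var ^ nat (e + 1) * ogf_int (c - 1 - 1) (e + 1)
      + t_var * q_var ^ nat (e + 1) * ogf_int (c - 1 - 1) e"
    using ogf_int_rec_parts[of "c - 1" "e + 1"] assms by simp
  ultimately show ?thesis
    unfolding shifted_prod_diff_def q_var_power_nat_plus_1[OF assms(2)] by (simp add: algebra_simps)
qed

lemma shifted_prod_diff_eq_prod:
  "b < 1 \<or> c < 1 \<Longrightarrow> shifted_prod_diff j a b c e = ogf_int a b * ogf_int c e"
  by (auto simp: shifted_prod_diff_def ogf_int_def)

lemma nonneg_coeffs2_shifted_prod_diff:
  assumes "c \<le> a + 1" "b \<le> e + 1" "int j \<le> (a + 1 - c) + (e + 1 - b)"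
  shows "nonneg_coeffs2 (shifted_prod_diff j a b c e)"
  using assms
proof (induction "nat (a + b + c + e)" arbitrary: a b c e j rule: less_induct)
  case less
  let ?P = "\<lambda>j a b c e. nonneg_coeffs2 (shifted_prod_diff j a b c e)"
  show ?case
  proof (cases "b < 1 \<or> c < 1")
    case True
    then show ?thesis
      by (simp add: shifted_prod_diff_eq_prod nonneg_coeffs2_mult nonneg_coeffs2_ogf_int)
  next
    case False
    with less.prems have "0 \<le> a" "0 \<le> e" "1 \<le> b" "1 \<le> c"
      by linarith+
    then have IH: "?P j' a' b' c' e'"
      if "a' + b' + c' + e' < a + b + c + e" "c' \<le> a' + 1" "b' \<le> e' + 1"
        "int j' \<le> (a' + 1 - c') + (e' + 1 - b')" for j' a' b' c' e'
      using less.hyps that by simp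
    note rec = shifted_prod_diff_rec_left_largest[OF \<open>0 \<le> a\<close> \<open>1 \<le> b\<close>]
      shifted_prod_diff_rec_left_parts[OF \<open>0 \<le> a\<close> \<open>1 \<le> b\<close>]
      shifted_prod_diff_rec_right_largest[OF \<open>1 \<le> c\<close> \<open>0 \<le> e\<close>]
      shifted_prod_diff_rec_right_parts[OF \<open>1 \<le> c\<close> \<open>0 \<le> e\<close>]
    consider
      "c \<le> a" "int j < (a + 1 - c) + (e + 1 - b)"
    | j' where "c \<le> a" "j = Suc j'"
    | j' where "c = a + 1" "b \<le> e" "j = Suc j'"
    | "c = a + 1" "b \<le> e" "j = 0"
    | "c = a + 1" "b = e + 1" "j = 0"
      using less.prems not0_implies_Suc by fastforce
    then show ?thesis
    proof cases
      case 1
      then have "?P j (a - 1) b c e" "?P (Suc j) a (b - 1) c e" "?P (Suc j) (a - 1) (b - 1) c e"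
        using less.prems \<open>1 \<le> b\<close> by (intro IH; linarith)+
      then show ?thesis
        using rec(1) by (simp add: nonneg_coeffs2_shift)
    next
      case 2
      then have "?P (Suc j') a (b - 1) c e" "?P j' (a - 1) b c e" "?P j' (a - 1) (b - 1) c e"
        using less.prems \<open>1 \<le> b\<close> by (intro IH; linarith)+
      then show ?thesis
        using rec(2)[of j'] 2 by (simp add: nonneg_coeffs2_shift)
    next
      case 3
      then have "?P (Suc j') a b (c - 1) e" "?P j' a b c (e - 1)" "?P j' a b (c - 1) (e - 1)"
        using less.prems \<open>1 \<le> c\<close> by (intro IH; linarith)+
      then show ?thesis
        using rec(3)[of j'] 3 by (simp add: nonneg_coeffs2_shift)
    next
      case 4
      then have "?P j a b c (e - 1)" "?P (Suc j) a b (c - 1) e" "?P (Suc j) a b (c - 1) (e - 1)"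
        using less.prems \<open>1 \<le> c\<close> by (intro IH; linarith)+
      then show ?thesis
        using rec(4) by (simp add: nonneg_coeffs2_shift)
    next
      case 5
      then show ?thesis
        by (simp add: shifted_prod_diff_def nonneg_coeffs2_0)
    qed
  qed
qed

lemma obinom_eq_ogf_int: "k \<le> n \<Longrightarrow> obinom n k = ogf_int (int n - int k) (int k)"
  by (simp add: obinom_eq_ogf ogf_int_def nat_diff_distrib)

theorem theorem1p5:
  fixes n k l :: nat
  assumes "0 < k" and "k \<le> l" and "l < n"
  shows "\<forall>i j. 0 \<le> coeff (coeff (obinom n k * obinom n l - obinom n (k - 1) * obinom n (l + 1)) i) j"
proof -
  have "obinom n k * obinom n l - obinom n (k - 1) * obinom n (l + 1)
      = shifted_prod_diff 0 (int n - int k) (int k) (int n - int l) (int l)"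
    using assms by (simp add: obinom_eq_ogf_int shifted_prod_diff_def algebra_simps)
  moreover have "nonneg_coeffs2 (shifted_prod_diff 0 (int n - int k) (int k) (int n - int l) (int l))"
    using assms by (intro nonneg_coeffs2_shifted_prod_diff) auto
  ultimately show ?thesis
    by (simp add: nonneg_coeffs2_def nonneg_coeffs_def)
qed

end
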